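(* For $B=\{x,y\}$ the equivalence relation $\equiv_{\textsc{MaxCut},B}$ restricted to $B$-boundaried graphs $G_B$ with $G-B$ edgeless has infinitely many equivalence classes; consequently, the parameterized problem \textsc{Maximum Cut}[vc] does not admit a boundaried kernelization (of any computable size $f$).
   Context: A boundaried graph $G_B$ is a finite simple graph $G$ together with a set $B\subseteq V(G)$ (the boundary). For boundaried graphs $G_B$ and $H_C$ with $V(G)\cap V(H)\subseteq B\cap C$, the gluing $G_B\oplus H_C$ is the simple graph obtained from the disjoint union of $G$ and $H$ by identifying each vertex of $B\cap C$ in $G$ with the identically named vertex in $H$ (an edge present in both is kept once). For an isomorphism-invariant optimization problem $\Pi$ on graphs with optimum value $\mathrm{OPT}_\Pi(G)$, two $B$-boundaried graphs $G_B,G'_B$ are gluing equivalent w.r.t. $\Pi$ and $B$, written $G_B\equiv_{\Pi,B}G'_B$, if there is $\Delta\in\mathbb{Z}$ with $\mathrm{OPT}_\Pi(G_B\oplus H_B)=\mathrm{OPT}_\Pi(G'_B\oplus H_B)+\Delta$ for every boundaried graph $H_B$. For a pure graph minimization problem $\rho$, a $\rho$-solution of $G$ is a feasible solution $s$ with value $\rho(G,s)$. For computable $f$, a boundaried kernelization of size $f$ for $\Pi[\rho]$ is a polynomial-time algorithm that, given a boundaried graph $G_B$ and a $\rho$-solution $s$ of $G$, outputs a boundaried graph $G'_B$ with $G_B\equiv_{\Pi,B}G'_B$, a $\rho$-solution $s'$ of $G'$ with $|G'|,|s'|,\rho(G',s')\le f(|B|+\rho(G,s))$ (encoding sizes), and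 an integer $\Delta$ with $\mathrm{OPT}_\Pi(G_B\oplus H_B)=\mathrm{OPT}_\Pi(G'_B\oplus H_B)+\Delta$ for all $H_B$. \textsc{Maximum Cut} is the maximization problem whose feasible solutions on $G$ are partitions $V(G)=X\,\dot\cup\,Y$, with value the number of edges with one endpoint in $X$ and one in $Y$. \textsc{Vertex Cover} (vc) is the minimization problem with feasible solutions $S\subseteq V(G)$ such that $G-S$ is edgeless, value $|S|$; \textsc{Maximum Cut}[vc] means $\rho=$ \textsc{Vertex Cover}. *)

theory Defs
  imports Main
begin

text \<open>Finite simple graphs on vertex names of type nat: a pair (V, E) with V finite and
  every edge a 2-element subset of V.\<close>
type_synonym graph = "nat set \<times> nat set set"

definition is_graph :: "graph \<Rightarrow> bool" where
  "is_graph G \<longleftrightarrow> finite (fst G) \<and>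
     (\<forall>e\<in>snd G. \<exists>u v. e = {u, v} \<and> u \<noteq> v \<and> u \<in> fst G \<and> v \<in> fst G)"

definition bgraph :: "graph \<Rightarrow> nat set \<Rightarrow> bool" where
  "bgraph G B \<longleftrightarrow> is_graph G \<and> B \<subseteq> fst G"

text \<open>Gluing: union of the graphs, identifying equally named vertices
  (only meaningful when the common vertices lie in the common boundary).\<close>
definition glue :: "graph \<Rightarrow> graph \<Rightarrow> graph" where
  "glue G H = (fst G \<union> fst H, snd G \<union> snd H)"

definition cut_value :: "graph \<Rightarrow> nat set \<Rightarrow> nat" where
  "cut_value G X = card {e \<in> snd G. \<exists>u v. e = {u, v} \<and> u \<in> X \<and> v \<in> fst G - X}"

definition maxcut :: "graph \<Rightarrow> nat" where
  "maxcut G = Max {cut_value G X | X. X \<subseteq> fst G}"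

definition gluing_equiv :: "nat set \<Rightarrow> graph \<Rightarrow> graph \<Rightarrow> bool" where
  "gluing_equiv B G G' \<longleftrightarrow> (\<exists>\<Delta>::int. \<forall>H. bgraph H B \<and> fst G \<inter> fst H \<subseteq> B
       \<and> fst G' \<inter> fst H \<subseteq> B \<longrightarrow> int (maxcut (glue G H)) = int (maxcut (glue G' H)) + \<Delta>)"

definition edgeless_outside :: "graph \<Rightarrow> nat set \<Rightarrow> bool" where
  "edgeless_outside G B \<longleftrightarrow> (\<forall>e\<in>snd G. e \<inter> B \<noteq> {})"

definition vc_sol :: "graph \<Rightarrow> nat set \<Rightarrow> bool" where
  "vc_sol G S \<longleftrightarrow> S \<subseteq> fst G \<and> (\<forall>e\<in>snd G. e \<inter> S \<noteq> {})"

definition gsize :: "graph \<Rightarrow> nat" where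
  "gsize G = card (fst G) + card (snd G)"

definition edgeless_dom :: "nat set \<Rightarrow> graph set" where
  "edgeless_dom B = {G. bgraph G B \<and> edgeless_outside G B}"

definition equiv_rel_on :: "nat set \<Rightarrow> (graph \<times> graph) set" where
  "equiv_rel_on B = {(G, G'). G \<in> edgeless_dom B \<and> G' \<in> edgeless_dom B \<and> gluing_equiv B G G'}"

text \<open>A boundaried kernelization (of size f) for MaxCut[vc], abstracted to a function:
  K maps (G, B, s) to (G', s', Delta).\<close>
definition is_bkernel ::
  "(nat \<Rightarrow> nat) \<Rightarrow> (graph \<Rightarrow> nat set \<Rightarrow> nat set \<Rightarrow> graph \<times> nat set \<times> int) \<Rightarrow> bool" where
  "is_bkernel f K \<longleftrightarrow> (\<forall>G B S. bgraph G B \<and> vc_sol G S \<longrightarrow>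
     (case K G B S of (G', S', \<Delta>) \<Rightarrow>
        bgraph G' B \<and> vc_sol G' S' \<and>
        gsize G' \<le> f (card B + card S) \<and> card S' \<le> f (card B + card S) \<and>
        gluing_equiv B G G' \<and>
        (\<forall>H. bgraph H B \<and> fst G \<inter> fst H \<subseteq> B \<and> fst G' \<inter> fst H \<subseteq> B \<longrightarrow>
           int (maxcut (glue G H)) = int (maxcut (glue G' H)) + \<Delta>)))"

end

theory Submission
  imports Defs
begin

text \<open>Let \<open>K\<^sub>a\<close> (\<open>biclique\<close>) join both boundary vertices x, y to a private vertices, and let
  \<open>P\<^sub>a\<close> (\<open>paths3\<close>) consist of a disjoint x--y paths of length 3. Alone, \<open>K\<^sub>a\<close> has a cut
  containing all its 2a edges, whereas \<open>K\<^sub>a \<oplus> P\<^sub>a\<close> is covered by a 5-cycles, so its maximum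
  cut is at most 4a. For any boundaried graph G and any cut Y of G separating x from y, Y extends
  to a cut of \<open>G \<oplus> P\<^sub>a\<close> containing all 3a path edges, while G alone has maximum cut at most
  |E(G)|. Comparing the offset \<open>\<Delta>\<close> for the two gluings shows that \<open>G \<equiv> K\<^sub>a\<close> forces
  \<open>a + cut(G, Y) \<le> |E(G)|\<close>. For \<open>G = K\<^sub>b\<close> and Y = {x} this gives a \<le> b, so the \<open>K\<^sub>a\<close>
  are pairwise inequivalent. A kernelization of size f applied to \<open>K\<^sub>a\<close> with the vertex cover
  {x, y} (parameter 2 + 2) returns G' with \<open>|E(G')| \<le> f 4\<close>, impossible once a > f 4.\<close>

definition cutset :: "graph \<Rightarrow> nat set \<Rightarrow> nat set set" where
  "cutset G X = {e \<in> snd G. \<exists>u v. e = {u, v} \<and> u \<in> X \<and> v \<in> fst G - X}"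

lemma cut_value_eq_card_cutset: "cut_value G X = card (cutset G X)"
  unfolding cut_value_def cutset_def by simp

lemma cutsetI: "{u, v} \<in> snd G \<Longrightarrow> u \<in> X \<Longrightarrow> v \<in> fst G \<Longrightarrow> v \<notin> X \<Longrightarrow> {u, v} \<in> cutset G X"
  unfolding cutset_def by blast

lemma cutset_separates: "{u, v} \<in> cutset G X \<Longrightarrow> u \<in> X \<longleftrightarrow> v \<notin> X"
  unfolding cutset_def by (auto simp: doubleton_eq_iff)

lemma cutset_subset_edges: "cutset G X \<subseteq> snd G"
  unfolding cutset_def by blast

lemma is_graph_edge_subset: "is_graph G \<Longrightarrow> e \<in> snd G \<Longrightarrow> e \<subseteq> fst G"
  unfolding is_graph_def by fastforce

lemma is_graph_finite_edges: "is_graph G \<Longrightarrow> finite (snd G)"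
  by (rule finite_subset[of _ "Pow (fst G)"]) (auto simp: is_graph_def dest: is_graph_edge_subset)

lemma finite_cut_values: "finite (fst G) \<Longrightarrow> finite {cut_value G X | X. X \<subseteq> fst G}"
  using finite_imageI[of "Pow (fst G)" "cut_value G"] by (simp add: image_def Pow_def)

lemma cut_value_le_maxcut: "finite (fst G) \<Longrightarrow> X \<subseteq> fst G \<Longrightarrow> cut_value G X \<le> maxcut G"
  unfolding maxcut_def by (rule Max_ge[OF finite_cut_values]) blast+

lemma maxcut_leI:
  assumes "finite (fst G)" "\<And>X. X \<subseteq> fst G \<Longrightarrow> cut_value G X \<le> k"
  shows "maxcut G \<le> k"
  unfolding maxcut_def using assms finite_cut_values[OF assms(1)] by (subst Max_le_iff) blast+

lemma maxcut_le_card_edges: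
  assumes "is_graph G" shows "maxcut G \<le> card (snd G)"
proof (rule maxcut_leI)
  show "finite (fst G)" using assms by (simp add: is_graph_def)
  show "cut_value G X \<le> card (snd G)" for X
    unfolding cut_value_eq_card_cutset
    by (rule card_mono[OF is_graph_finite_edges[OF assms] cutset_subset_edges])
qed

text \<open>The edges form the cycle x c y q p x, and a cut crosses every cycle an even number of times.\<close>

lemma card_cutset_Int_5cycle_le:
  "card (cutset G X \<inter> {{x, c}, {y, c}, {x, p}, {p, q}, {q, y}}) \<le> 4"
proof -
  let ?C = "{{x, c}, {y, c}, {x, p}, {p, q}, {q, y}}"
  have "\<not> ?C \<subseteq> cutset G X"
    using cutset_separates[of x c G X] cutset_separates[of y c G X] cutset_separates[of x p G X]
      cutset_separates[of p q G X] cutset_separates[of q y G X] by auto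
  then obtain e where e: "e \<in> ?C" "e \<notin> cutset G X" by blast
  have "card (cutset G X \<inter> ?C) \<le> card (?C - {e})" by (rule card_mono) (use e in auto)
  also have "\<dots> = card ?C - 1" using e(1) by (simp add: card_Diff_singleton)
  also have "\<dots> \<le> 4" using card_length[of "[{x, c}, {y, c}, {x, p}, {p, q}, {q, y}]"] by simp
  finally show ?thesis .
qed

lemma glue_edgeless: "B \<subseteq> fst G \<Longrightarrow> glue G (B, {}) = G"
  unfolding glue_def by (cases G) auto

lemma gluing_equiv_refl: "gluing_equiv B G G"
  unfolding gluing_equiv_def by (intro exI[of _ 0]) simp

lemma gluing_equiv_sym:
  assumes "gluing_equiv B G G'" shows "gluing_equiv B G' G"
proof -
  obtain \<Delta> where "\<forall>H. bgraph H B \<and> fst G \<inter> fst H \<subseteq> B \<and> fst G' \<inter> fst H \<subseteq> B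
      \<longrightarrow> int (maxcut (glue G H)) = int (maxcut (glue G' H)) + \<Delta>"
    using assms unfolding gluing_equiv_def by blast
  then show ?thesis unfolding gluing_equiv_def by (intro exI[of _ "- \<Delta>"]) auto
qed

lemma infinite_quotientI:
  assumes "infinite I" "f ` I \<subseteq> A" "\<And>i. i \<in> I \<Longrightarrow> (f i, f i) \<in> r"
    and "\<And>i j. i \<in> I \<Longrightarrow> j \<in> I \<Longrightarrow> (f i, f j) \<in> r \<Longrightarrow> i = j"
  shows "infinite (A // r)"
proof
  assume "finite (A // r)"
  moreover have "(\<lambda>i. r `` {f i}) ` I \<subseteq> A // r"
    using assms(2) by (auto intro: quotientI)
  moreover have "inj_on (\<lambda>i. r `` {f i}) I"
  proof (rule inj_onI)
    fix i j assume "i \<in> I" "j \<in> I" "r `` {f i} = r `` {f j}"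
    then show "i = j" using assms(3)[of j] assms(4)[of i j] by auto
  qed
  ultimately show False using assms(1) by (meson finite_imageD finite_subset)
qed

definition biclique :: "nat \<Rightarrow> nat \<Rightarrow> nat \<Rightarrow> nat \<Rightarrow> graph" where
  "biclique x y n a = ({x, y} \<union> {n..<n+a}, (\<lambda>i. {x, n+i}) ` {..<a} \<union> (\<lambda>i. {y, n+i}) ` {..<a})"

definition paths3 :: "nat \<Rightarrow> nat \<Rightarrow> nat \<Rightarrow> nat \<Rightarrow> graph" where
  "paths3 x y m a = ({x, y} \<union> {m..<m+2*a},
     (\<lambda>i. {x, m+2*i}) ` {..<a} \<union> (\<lambda>i. {m+2*i, m+2*i+1}) ` {..<a} \<union> (\<lambda>i. {m+2*i+1, y}) ` {..<a})"

lemma bgraph_biclique: "x \<noteq> y \<Longrightarrow> x < n \<Longrightarrow> y < n \<Longrightarrow> bgraph (biclique x y n a) {x, y}"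
  unfolding bgraph_def is_graph_def biclique_def by fastforce

lemma bgraph_paths3: "x \<noteq> y \<Longrightarrow> x < m \<Longrightarrow> y < m \<Longrightarrow> bgraph (paths3 x y m a) {x, y}"
  unfolding bgraph_def is_graph_def paths3_def by fastforce

lemma biclique_in_edgeless_dom:
  "x \<noteq> y \<Longrightarrow> x < n \<Longrightarrow> y < n \<Longrightarrow> biclique x y n a \<in> edgeless_dom {x, y}"
  using bgraph_biclique by (auto simp: edgeless_dom_def edgeless_outside_def biclique_def)

lemma card_biclique_edges:
  assumes "x \<noteq> y" "x < n" "y < n" shows "card (snd (biclique x y n a)) = 2*a"
proof -
  have "card (snd (biclique x y n a)) = card ((\<lambda>i. {x, n+i}) ` {..<a}) + card ((\<lambda>i. {y, n+i}) ` {..<a})"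
    unfolding biclique_def snd_conv using assms by (intro card_Un_disjoint) (auto simp: doubleton_eq_iff)
  also have "\<dots> = a + a"
    using assms by (subst (1 2) card_image) (auto simp: inj_on_def doubleton_eq_iff)
  finally show ?thesis by simp
qed

lemma card_paths3_edges:
  assumes "x \<noteq> y" "x < m" "y < m" shows "card (snd (paths3 x y m a)) = 3*a"
proof -
  have "card (snd (paths3 x y m a)) = card ((\<lambda>i. {x, m+2*i}) ` {..<a})
      + card ((\<lambda>i. {m+2*i, m+2*i+1}) ` {..<a}) + card ((\<lambda>i. {m+2*i+1, y}) ` {..<a})"
    unfolding paths3_def snd_conv using assms
    by (subst card_Un_disjoint card_Un_disjoint; auto simp: doubleton_eq_iff)+
  also have "\<dots> = a + a + a"
    using assms by (subst (1 2 3) card_image) (auto simp: inj_on_def doubleton_eq_iff)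
  finally show ?thesis by simp
qed

lemma maxcut_biclique_ge:
  assumes "x \<noteq> y" "x < n" "y < n" shows "2*a \<le> maxcut (biclique x y n a)"
proof -
  have "snd (biclique x y n a) \<subseteq> cutset (biclique x y n a) {x, y}"
    using assms by (auto intro!: cutsetI simp: biclique_def)
  then have "cutset (biclique x y n a) {x, y} = snd (biclique x y n a)"
    using cutset_subset_edges by blast
  then have "cut_value (biclique x y n a) {x, y} = 2*a"
    using card_biclique_edges[OF assms] by (simp add: cut_value_eq_card_cutset)
  then show ?thesis
    using cut_value_le_maxcut[of "biclique x y n a" "{x, y}"] by (simp add: biclique_def)
qed

lemma cut_value_biclique_ge:
  assumes "x \<noteq> y" "x < n" "y < n" shows "a \<le> cut_value (biclique x y n a) {x}"
proof -
  have "(\<lambda>i. {x, n+i}) ` {..<a} \<subseteq> cutset (biclique x y n a) {x}"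
    using assms by (auto intro!: cutsetI simp: biclique_def)
  moreover have "finite (cutset (biclique x y n a) {x})"
    using finite_subset[OF cutset_subset_edges] by (simp add: biclique_def)
  moreover have "card ((\<lambda>i. {x, n+i}) ` {..<a}) = a"
    using assms by (subst card_image) (auto simp: inj_on_def doubleton_eq_iff)
  ultimately show ?thesis unfolding cut_value_eq_card_cutset by (metis card_mono)
qed

lemma maxcut_glue_biclique_paths3_le: "maxcut (glue (biclique x y n a) (paths3 x y m a)) \<le> 4*a"
proof (rule maxcut_leI)
  let ?G = "glue (biclique x y n a) (paths3 x y m a)"
  let ?cycle = "\<lambda>i. {{x, n+i}, {y, n+i}, {x, m+2*i}, {m+2*i, m+2*i+1}, {m+2*i+1, y}}"
  show "finite (fst ?G)" by (simp add: glue_def biclique_def paths3_def)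
  fix X
  have "snd ?G \<subseteq> (\<Union>i<a. ?cycle i)"
    unfolding glue_def biclique_def paths3_def snd_conv by blast
  then have cover: "cutset ?G X \<subseteq> (\<Union>i<a. cutset ?G X \<inter> ?cycle i)"
    using cutset_subset_edges[of ?G X] by (simp only: Int_UN_distrib[symmetric]) blast
  have "cut_value ?G X \<le> card (\<Union>i<a. cutset ?G X \<inter> ?cycle i)"
    unfolding cut_value_eq_card_cutset by (rule card_mono[OF _ cover]) simp
  also have "\<dots> \<le> (\<Sum>i<a. card (cutset ?G X \<inter> ?cycle i))" by (rule card_UN_le) simp
  also have "\<dots> \<le> (\<Sum>i<a. 4)" by (intro sum_mono card_cutset_Int_5cycle_le)
  finally show "cut_value ?G X \<le> 4*a" by simp
qed

lemma maxcut_glue_paths3_ge: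
  assumes G: "bgraph G {x, y}" and m: "fst G \<subseteq> {..<m}"
    and Y: "Y \<subseteq> fst G" "x \<in> Y" "y \<notin> Y"
  shows "3*a + cut_value G Y \<le> maxcut (glue G (paths3 x y m a))"
proof -
  let ?GP = "glue G (paths3 x y m a)"
  let ?X = "Y \<union> (\<lambda>i. m+2*i+1) ` {..<a}"
  have g: "is_graph G" and xy: "x \<noteq> y" "x < m" "y < m"
    using G Y m by (auto simp: bgraph_def)
  have finE: "finite (snd G)" by (rule is_graph_finite_edges[OF g])
  have not_in_X: "m + 2*i \<notin> ?X" "y \<notin> ?X" for i
    using Y m xy by auto presburger
  have "cutset G Y \<subseteq> cutset ?GP ?X"
    using m by (fastforce simp: cutset_def glue_def)
  moreover have "snd (paths3 x y m a) \<subseteq> cutset ?GP ?X"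
    using Y(2) not_in_X
    by (auto intro!: cutsetI simp: glue_def paths3_def insert_commute[of "m+2*_"])
  moreover have "snd G \<inter> snd (paths3 x y m a) = {}"
    using m is_graph_edge_subset[OF g] by (fastforce simp: paths3_def)
  then have "card (cutset G Y \<union> snd (paths3 x y m a)) = cut_value G Y + 3*a"
    using finE card_paths3_edges[OF xy] cutset_subset_edges[of G Y]
    by (subst card_Un_disjoint) (auto simp: paths3_def cut_value_eq_card_cutset intro: finite_subset)
  moreover have "finite (cutset ?GP ?X)"
    using finE by (intro finite_subset[OF cutset_subset_edges]) (simp add: glue_def paths3_def)
  ultimately have "3*a + cut_value G Y \<le> cut_value ?GP ?X"
    unfolding cut_value_eq_card_cutset[of ?GP] by (metis add.commute card_mono Un_least)
  also have "\<dots> \<le> maxcut ?GP"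
    using g Y by (intro cut_value_le_maxcut) (auto simp: is_graph_def glue_def paths3_def)
  finally show ?thesis .
qed

lemma gluing_equiv_biclique_bound:
  assumes xy: "x \<noteq> y" "x < n" "y < n" and equiv: "gluing_equiv {x, y} (biclique x y n a) G"
    and G: "bgraph G {x, y}" and Y: "Y \<subseteq> fst G" "x \<in> Y" "y \<notin> Y"
  shows "a + cut_value G Y \<le> card (snd G)"
proof -
  obtain \<Delta> where \<Delta>: "\<forall>H. bgraph H {x, y} \<and> fst (biclique x y n a) \<inter> fst H \<subseteq> {x, y}
      \<and> fst G \<inter> fst H \<subseteq> {x, y}
      \<longrightarrow> int (maxcut (glue (biclique x y n a) H)) = int (maxcut (glue G H)) + \<Delta>"
    using equiv unfolding gluing_equiv_def by blast
  have g: "is_graph G" "{x, y} \<subseteq> fst G" using G by (auto simp: bgraph_def)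
  define m where "m = Max (fst G) + n + a + 1"
  have "finite (fst G)" using g(1) by (simp add: is_graph_def)
  then have m: "fst G \<subseteq> {..<m}"
    unfolding m_def by (auto dest: Max_ge simp: less_Suc_eq_le)
  have xym: "x < m" "y < m" using xy unfolding m_def by auto
  have "bgraph ({x, y}, {}) {x, y}" by (simp add: bgraph_def is_graph_def)
  then have "int (maxcut (glue (biclique x y n a) ({x, y}, {}))) = int (maxcut (glue G ({x, y}, {}))) + \<Delta>"
    using \<Delta> by auto
  moreover have "{x, y} \<subseteq> fst (biclique x y n a)" by (simp add: biclique_def)
  ultimately have "int (maxcut (biclique x y n a)) = int (maxcut G) + \<Delta>"
    using glue_edgeless[OF g(2)] glue_edgeless by metis
  moreover have "fst (biclique x y n a) \<inter> fst (paths3 x y m a) \<subseteq> {x, y}"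
    "fst G \<inter> fst (paths3 x y m a) \<subseteq> {x, y}"
    using m by (auto simp: biclique_def paths3_def m_def)
  then have "int (maxcut (glue (biclique x y n a) (paths3 x y m a)))
      = int (maxcut (glue G (paths3 x y m a))) + \<Delta>"
    using \<Delta> bgraph_paths3[OF xy(1) xym] by blast
  moreover note maxcut_biclique_ge[OF xy, of a] maxcut_le_card_edges[OF g(1)]
    maxcut_glue_biclique_paths3_le[of x y n a m] maxcut_glue_paths3_ge[OF G m Y, of a]
  ultimately show ?thesis by linarith
qed

lemma gluing_equiv_biclique_le:
  assumes xy: "x \<noteq> y" "x < n" "y < n"
    and "gluing_equiv {x, y} (biclique x y n a) (biclique x y n b)"
  shows "a \<le> b"
proof -
  have "a + cut_value (biclique x y n b) {x} \<le> card (snd (biclique x y n b))"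
    using assms bgraph_biclique[OF xy]
    by (intro gluing_equiv_biclique_bound) (auto simp: biclique_def)
  then show ?thesis
    using cut_value_biclique_ge[OF xy, of b] card_biclique_edges[OF xy, of b] by linarith
qed

lemma biclique_gluing_equiv_iff:
  assumes "x \<noteq> y" "x < n" "y < n"
  shows "gluing_equiv {x, y} (biclique x y n a) (biclique x y n b) \<longleftrightarrow> a = b"
proof
  assume "gluing_equiv {x, y} (biclique x y n a) (biclique x y n b)"
  then show "a = b"
    using gluing_equiv_biclique_le[OF assms] gluing_equiv_sym by (meson order_antisym)
qed (simp add: gluing_equiv_refl)

lemma infinite_edgeless_dom_quotient:
  assumes "x \<noteq> y" shows "infinite (edgeless_dom {x, y} // equiv_rel_on {x, y})"
proof (rule infinite_quotientI)
  define n where "n = Suc (x + y)"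
  have xy: "x \<noteq> y" "x < n" "y < n" using assms unfolding n_def by auto
  show "infinite (UNIV :: nat set)" by simp
  show "range (biclique x y n) \<subseteq> edgeless_dom {x, y}"
    using biclique_in_edgeless_dom[OF xy] by blast
  show "(biclique x y n a, biclique x y n a) \<in> equiv_rel_on {x, y}" for a
    using biclique_in_edgeless_dom[OF xy] gluing_equiv_refl by (simp add: equiv_rel_on_def)
  show "a = b" if "(biclique x y n a, biclique x y n b) \<in> equiv_rel_on {x, y}" for a b
    using that biclique_gluing_equiv_iff[OF xy] by (simp add: equiv_rel_on_def)
qed

lemma not_is_bkernel: "\<not> is_bkernel f K"
proof
  assume kernel: "is_bkernel f K"
  define B :: "nat set" where "B = {0, 1}"
  define G where "G = biclique 0 1 2 (Suc (f 4))"
  obtain G' S' \<Delta> where KG: "K G B B = (G', S', \<Delta>)" by (metis prod_cases3)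
  have "bgraph G B" "vc_sol G B"
    unfolding G_def B_def using bgraph_biclique[of 0 1 2]
    by (auto simp: vc_sol_def biclique_def)
  moreover have "card B + card B = 4" by (simp add: B_def)
  ultimately have G': "bgraph G' B" "gsize G' \<le> f 4" "gluing_equiv B G G'"
    using kernel[unfolded is_bkernel_def, rule_format, of G B B] KG by simp_all
  have "Suc (f 4) + cut_value G' {0} \<le> card (snd G')"
    using G' unfolding G_def B_def
    by (intro gluing_equiv_biclique_bound) (auto simp: bgraph_def)
  with G'(2) show False by (simp add: gsize_def)
qed

theorem mainTheorem11:
  fixes x y :: nat
  assumes "x \<noteq> y"
  shows "infinite (edgeless_dom {x, y} // equiv_rel_on {x, y})
         \<and> \<not> (\<exists>f K. is_bkernel f K)"
  using infinite_edgeless_dom_quotient[OF assms] not_is_bkernel by blast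

end
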